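(* The cut rule is admissible for system $\mathcal S$: every sequent derivable in $\mathcal S$ has a derivation in $\mathcal S$ without instances of the cut rule.
   Context: Fix countably infinite sets of names and variables and the constructors $\mathsf{pub}$ (unary) and $\mathsf{sign},\mathsf{blind},\langle\cdot,\cdot\rangle,\{\cdot\}_{\cdot}$ (binary). Let $E$ be the union of AC-convergent equational theories $E_1,\dots,E_n$ with pairwise disjoint signatures, all disjoint from the constructors, each containing at most one associative-commutative (AC) binary symbol $\oplus_i$; $E$ is presented by a rewrite system $R_E$ terminating and confluent modulo AC of the $\oplus_i$; $\Sigma_E$ is its signature. Terms: names, variables, $\mathsf{pub}(M)$, $\mathsf{sign}(M,N)$, $\mathsf{blind}(M,N)$, $\langle M,N\rangle$, $\{M\}_N$, $g(M_1,\dots,M_j)$ with $g\in\Sigma_E$; all terms ground. $\equiv$ is equality modulo AC; $\approx_E$ equality modulo $E$. A term is guarded if it is a name, a variable, or headed by a constructor. An $E$-context is a term with holes built only from function symbols of $\Sigma_E$. A sequent $\Gamma\vdash M$ is a finite set $\Gamma$ of terms and a term $M$, all in $R_E$-normal form modulo AC; $\Gamma,M$ means $\Gamma\cup\{M\}$. System $\mathcal S$: (id) $\Gamma\vdash M$ with no premise, if $M\approx_E C[M_1,\dots,M_k]$ for some $E$-context $C$ and $M_1,\dots,M_k\in\Gamma$; (cut) from $\Gamma\vdash M$ and $\Gamma,M\vdash T$ infer $\Gamma\vdash T$; ($p_L$) from $\Gamma,\langle M,N\rangle,M,N\vdash T$ infer $\Gamma,\langle M,N\rangle\vdash T$; ($p_R$)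 from $\Gamma\vdash M$, $\Gamma\vdash N$ infer $\Gamma\vdash\langle M,N\rangle$; ($e_L$) from $\Gamma,\{M\}_K\vdash K$ and $\Gamma,\{M\}_K,M,K\vdash N$ infer $\Gamma,\{M\}_K\vdash N$; ($e_R$) from $\Gamma\vdash M$, $\Gamma\vdash K$ infer $\Gamma\vdash\{M\}_K$; ($\mathsf{sign}_L$) from $\Gamma,\mathsf{sign}(M,K),\mathsf{pub}(L),M\vdash N$ infer $\Gamma,\mathsf{sign}(M,K),\mathsf{pub}(L)\vdash N$, provided $K\equiv L$; ($\mathsf{sign}_R$) from $\Gamma\vdash M$, $\Gamma\vdash K$ infer $\Gamma\vdash\mathsf{sign}(M,K)$; ($\mathsf{blind}_{L1}$) from $\Gamma,\mathsf{blind}(M,K)\vdash K$ and $\Gamma,\mathsf{blind}(M,K),M,K\vdash N$ infer $\Gamma,\mathsf{blind}(M,K)\vdash N$; ($\mathsf{blind}_R$) from $\Gamma\vdash M$, $\Gamma\vdash K$ infer $\Gamma\vdash\mathsf{blind}(M,K)$; ($\mathsf{blind}_{L2}$) from $\Gamma,\mathsf{sign}(\mathsf{blind}(M,R),K)\vdash R$ and $\Gamma,\mathsf{sign}(\mathsf{blind}(M,R),K),\mathsf{sign}(M,K),R\vdash N$ infer $\Gamma,\mathsf{sign}(\mathsf{blind}(M,R),K)\vdash N$; ($gs$) from $\Gamma\vdash A$ and $\Gamma,A\vdash M$ infer $\Gamma\vdash M$, provided $A$ is a guarded subterm of a term in $\Gamma\cup\{M\}$. *)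

theory Defs
  imports Main
begin

text \<open>Protocol variables are atoms (all terms are ground).\<close>

datatype 'f trm =
    Nm nat
  | Vr nat
  | Pub "'f trm"
  | Sign "'f trm" "'f trm"
  | Blind "'f trm" "'f trm"
  | Pair "'f trm" "'f trm"
  | Enc "'f trm" "'f trm"
  | Fn 'f "'f trm list"

text \<open>Patterns over Sigma_E with pattern variables PV i. They are used both for
the sides of the rewrite rules of R_E and for E-contexts (PV i are the holes).\<close>

datatype 'f pat = PV nat | PF 'f "'f pat list"

fun inst :: "'f pat \<Rightarrow> (nat \<Rightarrow> 'f trm) \<Rightarrow> 'f trm" where
  "inst (PV i) \<sigma> = \<sigma> i"
| "inst (PF g ps) \<sigma> = Fn g (map (\<lambda>p. inst p \<sigma>) ps)"

fun pvars :: "'f pat \<Rightarrow> nat set" where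
  "pvars (PV i) = {i}"
| "pvars (PF g ps) = \<Union> (set (map pvars ps))"

fun pat_wf :: "('f \<Rightarrow> nat) \<Rightarrow> 'f pat \<Rightarrow> bool" where
  "pat_wf ar (PV i) = True"
| "pat_wf ar (PF g ps) = (length ps = ar g \<and> (\<forall>p\<in>set ps. pat_wf ar p))"

fun pat_syms :: "'f pat \<Rightarrow> 'f set" where
  "pat_syms (PV i) = {}"
| "pat_syms (PF g ps) = insert g (\<Union> (set (map pat_syms ps)))"

fun trm_wf :: "('f \<Rightarrow> nat) \<Rightarrow> 'f trm \<Rightarrow> bool" where
  "trm_wf ar (Nm n) = True"
| "trm_wf ar (Vr n) = True"
| "trm_wf ar (Pub M) = trm_wf ar M"
| "trm_wf ar (Sign M N) = (trm_wf ar M \<and> trm_wf ar N)"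
| "trm_wf ar (Blind M N) = (trm_wf ar M \<and> trm_wf ar N)"
| "trm_wf ar (Pair M N) = (trm_wf ar M \<and> trm_wf ar N)"
| "trm_wf ar (Enc M N) = (trm_wf ar M \<and> trm_wf ar N)"
| "trm_wf ar (Fn g Ms) = (length Ms = ar g \<and> (\<forall>M\<in>set Ms. trm_wf ar M))"

inductive aceq :: "'f set \<Rightarrow> 'f trm \<Rightarrow> 'f trm \<Rightarrow> bool" for acs where
  ac_refl: "aceq acs s s"
| ac_sym: "aceq acs s t \<Longrightarrow> aceq acs t s"
| ac_trans: "aceq acs s t \<Longrightarrow> aceq acs t u \<Longrightarrow> aceq acs s u"
| ac_comm: "f \<in> acs \<Longrightarrow> aceq acs (Fn f [a, b]) (Fn f [b, a])"
| ac_assoc: "f \<in> acs \<Longrightarrow> aceq acs (Fn f [Fn f [a, b], c]) (Fn f [a, Fn f [b, c]])"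
| ac_pub: "aceq acs s t \<Longrightarrow> aceq acs (Pub s) (Pub t)"
| ac_sign: "aceq acs s t \<Longrightarrow> aceq acs u v \<Longrightarrow> aceq acs (Sign s u) (Sign t v)"
| ac_blind: "aceq acs s t \<Longrightarrow> aceq acs u v \<Longrightarrow> aceq acs (Blind s u) (Blind t v)"
| ac_pair: "aceq acs s t \<Longrightarrow> aceq acs u v \<Longrightarrow> aceq acs (Pair s u) (Pair t v)"
| ac_enc: "aceq acs s t \<Longrightarrow> aceq acs u v \<Longrightarrow> aceq acs (Enc s u) (Enc t v)"
| ac_fn: "aceq acs s t \<Longrightarrow> aceq acs (Fn g (xs @ s # ys)) (Fn g (xs @ t # ys))"

inductive rstep :: "('f pat \<times> 'f pat) set \<Rightarrow> 'f trm \<Rightarrow> 'f trm \<Rightarrow> bool" for R where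
  rs_root: "(l, r) \<in> R \<Longrightarrow> rstep R (inst l \<sigma>) (inst r \<sigma>)"
| rs_pub: "rstep R s t \<Longrightarrow> rstep R (Pub s) (Pub t)"
| rs_sign1: "rstep R s t \<Longrightarrow> rstep R (Sign s u) (Sign t u)"
| rs_sign2: "rstep R s t \<Longrightarrow> rstep R (Sign u s) (Sign u t)"
| rs_blind1: "rstep R s t \<Longrightarrow> rstep R (Blind s u) (Blind t u)"
| rs_blind2: "rstep R s t \<Longrightarrow> rstep R (Blind u s) (Blind u t)"
| rs_pair1: "rstep R s t \<Longrightarrow> rstep R (Pair s u) (Pair t u)"
| rs_pair2: "rstep R s t \<Longrightarrow> rstep R (Pair u s) (Pair u t)"
| rs_enc1: "rstep R s t \<Longrightarrow> rstep R (Enc s u) (Enc t u)"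
| rs_enc2: "rstep R s t \<Longrightarrow> rstep R (Enc u s) (Enc u t)"
| rs_fn: "rstep R s t \<Longrightarrow> rstep R (Fn g (xs @ s # ys)) (Fn g (xs @ t # ys))"

definition rstep_ac :: "'f set \<Rightarrow> ('f pat \<times> 'f pat) set \<Rightarrow> 'f trm \<Rightarrow> 'f trm \<Rightarrow> bool" where
  "rstep_ac acs R s t \<longleftrightarrow> (\<exists>s' t'. aceq acs s s' \<and> rstep R s' t' \<and> aceq acs t' t)"

definition terminating_mod_ac :: "'f set \<Rightarrow> ('f pat \<times> 'f pat) set \<Rightarrow> bool" where
  "terminating_mod_ac acs R \<longleftrightarrow> wfP (\<lambda>t s. rstep_ac acs R s t)"

definition conv :: "'f set \<Rightarrow> ('f pat \<times> 'f pat) set \<Rightarrow> 'f trm \<Rightarrow> 'f trm \<Rightarrow> bool" where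
  "conv acs R = (\<lambda>s t. rstep R s t \<or> rstep R t s \<or> aceq acs s t)\<^sup>*\<^sup>*"

definition confluent_mod_ac :: "'f set \<Rightarrow> ('f pat \<times> 'f pat) set \<Rightarrow> bool" where
  "confluent_mod_ac acs R \<longleftrightarrow>
     (\<forall>s t. conv acs R s t \<longrightarrow>
        (\<exists>s' t'. (rstep_ac acs R)\<^sup>*\<^sup>* s s' \<and> (rstep_ac acs R)\<^sup>*\<^sup>* t t' \<and> aceq acs s' t'))"

definition normal_mod_ac :: "'f set \<Rightarrow> ('f pat \<times> 'f pat) set \<Rightarrow> 'f trm \<Rightarrow> bool" where
  "normal_mod_ac acs R s \<longleftrightarrow> \<not> (\<exists>t. rstep_ac acs R s t)"

text \<open>th assigns each symbol of Sigma_E to one of the theories E_1..E_n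
(indices 0..n-1); ar is the arity; acs is the set of AC symbols; R is R_E.\<close>

definition rules_of :: "('f \<Rightarrow> nat) \<Rightarrow> nat \<Rightarrow> ('f pat \<times> 'f pat) set \<Rightarrow> ('f pat \<times> 'f pat) set" where
  "rules_of th i R = {(l, r) \<in> R. pat_syms l \<union> pat_syms r \<subseteq> {g. th g = i}}"

definition E_setting ::
  "('f \<Rightarrow> nat) \<Rightarrow> ('f \<Rightarrow> nat) \<Rightarrow> 'f set \<Rightarrow> ('f pat \<times> 'f pat) set \<Rightarrow> bool" where
  "E_setting ar th acs R \<longleftrightarrow>
     (\<exists>n. \<forall>g. th g < n)
   \<and> (\<forall>f\<in>acs. ar f = 2)
   \<and> (\<forall>f\<in>acs. \<forall>g\<in>acs. th f = th g \<longrightarrow> f = g)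
   \<and> (\<forall>(l, r)\<in>R. pat_wf ar l \<and> pat_wf ar r \<and> pvars r \<subseteq> pvars l \<and> (\<forall>i. l \<noteq> PV i))
   \<and> (\<forall>(l, r)\<in>R. \<exists>i. (l, r) \<in> rules_of th i R)
   \<and> (\<forall>i. terminating_mod_ac acs (rules_of th i R) \<and> confluent_mod_ac acs (rules_of th i R))
   \<and> terminating_mod_ac acs R \<and> confluent_mod_ac acs R"

definition is_seq :: "('f \<Rightarrow> nat) \<Rightarrow> 'f set \<Rightarrow> ('f pat \<times> 'f pat) set \<Rightarrow> 'f trm set \<Rightarrow> 'f trm \<Rightarrow> bool" where
  "is_seq ar acs R \<Gamma> M \<longleftrightarrow> finite \<Gamma> \<and>
     (\<forall>N\<in>insert M \<Gamma>. trm_wf ar N \<and> normal_mod_ac acs R N)"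

text \<open>E-contexts are well-formed patterns over Sigma_E; the holes PV i are filled
by the terms \<sigma> i, all taken from \<Gamma>.\<close>

definition id_ok :: "('f \<Rightarrow> nat) \<Rightarrow> 'f set \<Rightarrow> ('f pat \<times> 'f pat) set \<Rightarrow> 'f trm set \<Rightarrow> 'f trm \<Rightarrow> bool" where
  "id_ok ar acs R \<Gamma> M \<longleftrightarrow>
     (\<exists>C \<sigma>. pat_wf ar C \<and> (\<forall>i\<in>pvars C. \<sigma> i \<in> \<Gamma>) \<and> conv acs R M (inst C \<sigma>))"

fun guarded :: "'f trm \<Rightarrow> bool" where
  "guarded (Fn g Ms) = False"
| "guarded _ = True"

inductive subterm :: "'f trm \<Rightarrow> 'f trm \<Rightarrow> bool" where
  st_refl: "subterm s s"
| st_pub: "subterm s M \<Longrightarrow> subterm s (Pub M)"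
| st_sign1: "subterm s M \<Longrightarrow> subterm s (Sign M N)"
| st_sign2: "subterm s N \<Longrightarrow> subterm s (Sign M N)"
| st_blind1: "subterm s M \<Longrightarrow> subterm s (Blind M N)"
| st_blind2: "subterm s N \<Longrightarrow> subterm s (Blind M N)"
| st_pair1: "subterm s M \<Longrightarrow> subterm s (Pair M N)"
| st_pair2: "subterm s N \<Longrightarrow> subterm s (Pair M N)"
| st_enc1: "subterm s M \<Longrightarrow> subterm s (Enc M N)"
| st_enc2: "subterm s N \<Longrightarrow> subterm s (Enc M N)"
| st_fn: "M \<in> set Ms \<Longrightarrow> subterm s M \<Longrightarrow> subterm s (Fn g Ms)"

text \<open>derS ar acs R c \<Gamma> M: the sequent \<Gamma> |- M is derivable in S; the flag c says
whether the cut rule may be used.\<close>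

inductive derS :: "('f \<Rightarrow> nat) \<Rightarrow> 'f set \<Rightarrow> ('f pat \<times> 'f pat) set \<Rightarrow> bool \<Rightarrow> 'f trm set \<Rightarrow> 'f trm \<Rightarrow> bool"
  for ar acs R where
  r_id: "is_seq ar acs R \<Gamma> M \<Longrightarrow> id_ok ar acs R \<Gamma> M \<Longrightarrow> derS ar acs R c \<Gamma> M"
| r_cut: "is_seq ar acs R \<Gamma> T \<Longrightarrow> derS ar acs R True \<Gamma> M \<Longrightarrow> derS ar acs R True (insert M \<Gamma>) T
          \<Longrightarrow> derS ar acs R True \<Gamma> T"
| r_pL: "is_seq ar acs R (insert (Pair M N) \<Gamma>) T
         \<Longrightarrow> derS ar acs R c (\<Gamma> \<union> {Pair M N, M, N}) T
         \<Longrightarrow> derS ar acs R c (insert (Pair M N) \<Gamma>) T"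
| r_pR: "is_seq ar acs R \<Gamma> (Pair M N) \<Longrightarrow> derS ar acs R c \<Gamma> M \<Longrightarrow> derS ar acs R c \<Gamma> N
         \<Longrightarrow> derS ar acs R c \<Gamma> (Pair M N)"
| r_eL: "is_seq ar acs R (insert (Enc M K) \<Gamma>) N
         \<Longrightarrow> derS ar acs R c (insert (Enc M K) \<Gamma>) K
         \<Longrightarrow> derS ar acs R c (\<Gamma> \<union> {Enc M K, M, K}) N
         \<Longrightarrow> derS ar acs R c (insert (Enc M K) \<Gamma>) N"
| r_eR: "is_seq ar acs R \<Gamma> (Enc M K) \<Longrightarrow> derS ar acs R c \<Gamma> M \<Longrightarrow> derS ar acs R c \<Gamma> K
         \<Longrightarrow> derS ar acs R c \<Gamma> (Enc M K)"
| r_signL: "aceq acs K L \<Longrightarrow> is_seq ar acs R (\<Gamma> \<union> {Sign M K, Pub L}) N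
         \<Longrightarrow> derS ar acs R c (\<Gamma> \<union> {Sign M K, Pub L, M}) N
         \<Longrightarrow> derS ar acs R c (\<Gamma> \<union> {Sign M K, Pub L}) N"
| r_signR: "is_seq ar acs R \<Gamma> (Sign M K) \<Longrightarrow> derS ar acs R c \<Gamma> M \<Longrightarrow> derS ar acs R c \<Gamma> K
         \<Longrightarrow> derS ar acs R c \<Gamma> (Sign M K)"
| r_blindL1: "is_seq ar acs R (insert (Blind M K) \<Gamma>) N
         \<Longrightarrow> derS ar acs R c (insert (Blind M K) \<Gamma>) K
         \<Longrightarrow> derS ar acs R c (\<Gamma> \<union> {Blind M K, M, K}) N
         \<Longrightarrow> derS ar acs R c (insert (Blind M K) \<Gamma>) N"
| r_blindR: "is_seq ar acs R \<Gamma> (Blind M K) \<Longrightarrow> derS ar acs R c \<Gamma> M \<Longrightarrow> derS ar acs R c \<Gamma> K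
         \<Longrightarrow> derS ar acs R c \<Gamma> (Blind M K)"
| r_blindL2: "is_seq ar acs R (insert (Sign (Blind M Rr) K) \<Gamma>) N
         \<Longrightarrow> derS ar acs R c (insert (Sign (Blind M Rr) K) \<Gamma>) Rr
         \<Longrightarrow> derS ar acs R c (\<Gamma> \<union> {Sign (Blind M Rr) K, Sign M K, Rr}) N
         \<Longrightarrow> derS ar acs R c (insert (Sign (Blind M Rr) K) \<Gamma>) N"
| r_gs: "is_seq ar acs R \<Gamma> M \<Longrightarrow> guarded A \<Longrightarrow> (\<exists>B\<in>insert M \<Gamma>. subterm A B)
         \<Longrightarrow> derS ar acs R c \<Gamma> A \<Longrightarrow> derS ar acs R c (insert A \<Gamma>) M
         \<Longrightarrow> derS ar acs R c \<Gamma> M"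

end

theory Submission
  imports Defs
begin

(*
  Cuts are eliminated by induction on the size of the cut term P and, inside, on the
  cut-free derivation of the left premise. If that derivation ends in a left rule or in
  the guarded-subterm rule, the cut is permuted above it. Otherwise P was introduced by a
  right rule or is an unguarded term of the E-closure of the context, and we analyse the
  right premise: left rules decomposing P become cuts on its smaller components, and an
  identity axiom using P is either an instance of the guarded-subterm rule (when P occurs in
  the sequent) or does not need P at all. Both facts rest on one observation about the
  theory: rewriting with R_E modulo AC never creates guarded subterms, so a normal term of
  the E-closure of a set of normal terms has no guarded subterms besides theirs (up to AC),
  and a guarded P absent from the sequent can be replaced by any other term in the E-context.
*)

lemma subterm_trans: "subterm b c \<Longrightarrow> subterm a b \<Longrightarrow> subterm a c"
  by (induction b c rule: subterm.induct) (auto intro: subterm.intros)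

inductive_simps subterm_Nm [simp]: "subterm u (Nm n)"
inductive_simps subterm_Vr [simp]: "subterm u (Vr n)"
inductive_simps subterm_Pub [simp]: "subterm u (Pub a)"
inductive_simps subterm_Sign [simp]: "subterm u (Sign a b)"
inductive_simps subterm_Blind [simp]: "subterm u (Blind a b)"
inductive_simps subterm_Pair [simp]: "subterm u (Pair a b)"
inductive_simps subterm_Enc [simp]: "subterm u (Enc a b)"
lemma subterm_Fn [simp]: "subterm u (Fn g ts) \<longleftrightarrow> u = Fn g ts \<or> (\<exists>t\<in>set ts. subterm u t)"
  by (auto elim: subterm.cases intro: subterm.intros)

lemma size_subterm: "subterm u t \<Longrightarrow> u = t \<or> size u < size t"
proof (induction rule: subterm.induct)
  case (st_fn M Ms s g)
  then show ?case using size_list_estimation'[of M Ms "size M" size] by fastforce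
qed auto

lemma subterm_trm_wf: "subterm u s \<Longrightarrow> trm_wf ar s \<Longrightarrow> trm_wf ar u"
  by (induction rule: subterm.induct) auto

lemma aceq_guarded: "aceq acs s t \<Longrightarrow> guarded s = guarded t"
  by (induction rule: aceq.induct) auto

lemma aceq_trm_wf: "aceq acs s t \<Longrightarrow> trm_wf ar s = trm_wf ar t"
  by (induction rule: aceq.induct) auto

lemma aceq_guarded_shape:
  "aceq acs s t \<Longrightarrow> (case s of
      Nm n \<Rightarrow> t = Nm n
    | Vr n \<Rightarrow> t = Vr n
    | Pub a \<Rightarrow> (\<exists>a'. t = Pub a' \<and> aceq acs a a')
    | Sign a b \<Rightarrow> (\<exists>a' b'. t = Sign a' b' \<and> aceq acs a a' \<and> aceq acs b b')
    | Blind a b \<Rightarrow> (\<exists>a' b'. t = Blind a' b' \<and> aceq acs a a' \<and> aceq acs b b')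
    | Pair a b \<Rightarrow> (\<exists>a' b'. t = Pair a' b' \<and> aceq acs a a' \<and> aceq acs b b')
    | Enc a b \<Rightarrow> (\<exists>a' b'. t = Enc a' b' \<and> aceq acs a a' \<and> aceq acs b b')
    | Fn g ts \<Rightarrow> \<not> guarded t)"
proof (induction rule: aceq.induct)
  case (ac_refl s) then show ?case by (cases s) (auto intro: aceq.ac_refl)
next
  case (ac_sym s t) then show ?case by (cases s; cases t) (auto intro: aceq.ac_sym)
next
  case (ac_trans s t u) then show ?case by (cases s; cases t) (auto intro: aceq.ac_trans)
qed auto

lemma aceq_constructorD:
  "aceq acs (Pub a) t \<Longrightarrow> \<exists>a'. t = Pub a' \<and> aceq acs a a'"
  "aceq acs (Sign a b) t \<Longrightarrow> \<exists>a' b'. t = Sign a' b' \<and> aceq acs a a' \<and> aceq acs b b'"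
  "aceq acs (Blind a b) t \<Longrightarrow> \<exists>a' b'. t = Blind a' b' \<and> aceq acs a a' \<and> aceq acs b b'"
  "aceq acs (Pair a b) t \<Longrightarrow> \<exists>a' b'. t = Pair a' b' \<and> aceq acs a a' \<and> aceq acs b b'"
  "aceq acs (Enc a b) t \<Longrightarrow> \<exists>a' b'. t = Enc a' b' \<and> aceq acs a a' \<and> aceq acs b b'"
  by (drule aceq_guarded_shape, simp)+

definition guarded_subterms_le :: "'f set \<Rightarrow> 'f trm \<Rightarrow> 'f trm \<Rightarrow> bool" where
  "guarded_subterms_le acs s t \<longleftrightarrow>
     (\<forall>u. subterm u s \<longrightarrow> guarded u \<longrightarrow> (\<exists>u'. subterm u' t \<and> aceq acs u u'))"

lemma guarded_subterms_le_if_subterms: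
  "(\<And>u. subterm u s \<Longrightarrow> guarded u \<Longrightarrow> subterm u t) \<Longrightarrow> guarded_subterms_le acs s t"
  unfolding guarded_subterms_le_def by (blast intro: aceq.ac_refl)

lemma aceq_guarded_subterms_le:
  "aceq acs s t \<Longrightarrow> guarded_subterms_le acs s t \<and> guarded_subterms_le acs t s"
proof (induction rule: aceq.induct)
  case (ac_trans s t u)
  then show ?case unfolding guarded_subterms_le_def by (meson aceq.ac_trans aceq_guarded)
next
  case ac_comm
  then show ?case by (auto intro!: guarded_subterms_le_if_subterms)
next
  case ac_assoc
  then show ?case by (auto intro!: guarded_subterms_le_if_subterms)
qed (auto simp: guarded_subterms_le_def intro: aceq.intros)

lemma guarded_subterms_aceq_left:
  "aceq acs s t \<Longrightarrow> subterm u t \<Longrightarrow> guarded u \<Longrightarrow> \<exists>u'. subterm u' s \<and> aceq acs u' u"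
  using aceq_guarded_subterms_le[of acs s t] unfolding guarded_subterms_le_def
  by (meson aceq.ac_sym)

lemma guarded_subterms_aceq_right:
  "aceq acs s t \<Longrightarrow> subterm u s \<Longrightarrow> guarded u \<Longrightarrow> \<exists>u'. subterm u' t \<and> aceq acs u u'"
  using aceq_guarded_subterms_le[of acs s t] unfolding guarded_subterms_le_def by blast

lemma rstep_not_normal: "rstep R s t \<Longrightarrow> \<not> normal_mod_ac acs R s"
  unfolding normal_mod_ac_def rstep_ac_def using aceq.ac_refl by blast

lemma normal_mod_ac_aceq: "normal_mod_ac acs R s \<Longrightarrow> aceq acs s t \<Longrightarrow> normal_mod_ac acs R t"
  unfolding normal_mod_ac_def rstep_ac_def by (meson aceq.ac_trans)

lemma normal_mod_ac_rtranclp: "(rstep_ac acs R)\<^sup>*\<^sup>* s t \<Longrightarrow> normal_mod_ac acs R s \<Longrightarrow> t = s"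
  by (induction rule: converse_rtranclp_induct) (auto simp: normal_mod_ac_def)

lemma normal_mod_ac_ctx:
  assumes "\<And>a b. aceq acs a b \<Longrightarrow> aceq acs (F a) (F b)"
    and "\<And>a b. rstep R a b \<Longrightarrow> rstep R (F a) (F b)"
    and "normal_mod_ac acs R (F M)"
  shows "normal_mod_ac acs R M"
  using assms unfolding normal_mod_ac_def rstep_ac_def by (meson aceq.ac_refl)

lemma normal_mod_ac_subterm: "subterm u s \<Longrightarrow> normal_mod_ac acs R s \<Longrightarrow> normal_mod_ac acs R u"
proof (induction rule: subterm.induct)
  case (st_fn M Ms s g)
  then obtain xs ys where "Ms = xs @ M # ys" by (meson split_list)
  with st_fn show ?case
    using normal_mod_ac_ctx[where F="\<lambda>x. Fn g (xs @ x # ys)"] by (metis ac_fn rs_fn)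
next
  case st_pub then show ?case using normal_mod_ac_ctx[where F=Pub] by (metis ac_pub rs_pub)
next
  case (st_sign1 s M N) then show ?case
    using normal_mod_ac_ctx[where F="\<lambda>x. Sign x N"] by (metis ac_sign ac_refl rs_sign1)
next
  case (st_sign2 s N M) then show ?case
    using normal_mod_ac_ctx[where F="Sign M"] by (metis ac_sign ac_refl rs_sign2)
next
  case (st_blind1 s M N) then show ?case
    using normal_mod_ac_ctx[where F="\<lambda>x. Blind x N"] by (metis ac_blind ac_refl rs_blind1)
next
  case (st_blind2 s N M) then show ?case
    using normal_mod_ac_ctx[where F="Blind M"] by (metis ac_blind ac_refl rs_blind2)
next
  case (st_pair1 s M N) then show ?case
    using normal_mod_ac_ctx[where F="\<lambda>x. Pair x N"] by (metis ac_pair ac_refl rs_pair1)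
next
  case (st_pair2 s N M) then show ?case
    using normal_mod_ac_ctx[where F="Pair M"] by (metis ac_pair ac_refl rs_pair2)
next
  case (st_enc1 s M N) then show ?case
    using normal_mod_ac_ctx[where F="\<lambda>x. Enc x N"] by (metis ac_enc ac_refl rs_enc1)
next
  case (st_enc2 s N M) then show ?case
    using normal_mod_ac_ctx[where F="Enc M"] by (metis ac_enc ac_refl rs_enc2)
qed simp

definition wf_nf :: "('f \<Rightarrow> nat) \<Rightarrow> 'f set \<Rightarrow> ('f pat \<times> 'f pat) set \<Rightarrow> 'f trm \<Rightarrow> bool" where
  "wf_nf ar acs R t \<longleftrightarrow> trm_wf ar t \<and> normal_mod_ac acs R t"

lemma wf_nf_subterm: "wf_nf ar acs R t \<Longrightarrow> subterm u t \<Longrightarrow> wf_nf ar acs R u"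
  unfolding wf_nf_def using normal_mod_ac_subterm subterm_trm_wf by blast

lemma wf_nf_aceq: "wf_nf ar acs R s \<Longrightarrow> aceq acs s t \<Longrightarrow> wf_nf ar acs R t"
  unfolding wf_nf_def using aceq_trm_wf normal_mod_ac_aceq by blast

lemma wf_nf_argsD:
  "wf_nf ar acs R (Pub a) \<Longrightarrow> wf_nf ar acs R a"
  "wf_nf ar acs R (Sign a b) \<Longrightarrow> wf_nf ar acs R a \<and> wf_nf ar acs R b"
  "wf_nf ar acs R (Blind a b) \<Longrightarrow> wf_nf ar acs R a \<and> wf_nf ar acs R b"
  "wf_nf ar acs R (Pair a b) \<Longrightarrow> wf_nf ar acs R a \<and> wf_nf ar acs R b"
  "wf_nf ar acs R (Enc a b) \<Longrightarrow> wf_nf ar acs R a \<and> wf_nf ar acs R b"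
  by (meson wf_nf_subterm st_refl subterm.intros)+

lemma is_seq_iff: "is_seq ar acs R \<Gamma> M \<longleftrightarrow> finite \<Gamma> \<and> wf_nf ar acs R M \<and> (\<forall>N\<in>\<Gamma>. wf_nf ar acs R N)"
  unfolding is_seq_def wf_nf_def by auto

lemma is_seq_insert [simp]:
  "is_seq ar acs R (insert A \<Gamma>) T \<longleftrightarrow> wf_nf ar acs R A \<and> is_seq ar acs R \<Gamma> T"
  by (auto simp: is_seq_iff)

lemma is_seq_concl: "is_seq ar acs R \<Gamma> T \<Longrightarrow> wf_nf ar acs R M \<Longrightarrow> is_seq ar acs R \<Gamma> M"
  by (simp add: is_seq_iff)

lemma is_seq_memD: "is_seq ar acs R \<Gamma> T \<Longrightarrow> X \<in> \<Gamma> \<Longrightarrow> wf_nf ar acs R X"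
  by (simp add: is_seq_iff)

section \<open>Convertibility and the E-closure\<close>

lemma conv_refl: "conv acs R s s"
  unfolding conv_def by simp

lemma conv_trans: "conv acs R s t \<Longrightarrow> conv acs R t u \<Longrightarrow> conv acs R s u"
  unfolding conv_def by simp

lemma conv_sym: "conv acs R s t \<Longrightarrow> conv acs R t s"
  unfolding conv_def by (rule sympD[OF symp_rtranclp]) (auto intro: sympI aceq.ac_sym)

lemma aceq_conv: "aceq acs s t \<Longrightarrow> conv acs R s t"
  unfolding conv_def by auto

lemma rstep_conv: "rstep R s t \<Longrightarrow> conv acs R s t"
  unfolding conv_def by auto

lemma conv_Fn_arg: "conv acs R s t \<Longrightarrow> conv acs R (Fn g (xs @ s # ys)) (Fn g (xs @ t # ys))"
  unfolding conv_def
proof (induction rule: rtranclp_induct)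
  case (step y z)
  then show ?case by (auto intro: rtranclp.rtrancl_into_rtrancl rs_fn ac_fn)
qed simp

lemma conv_Fn_args:
  "list_all2 (conv acs R) xs ys \<Longrightarrow> conv acs R (Fn g (pre @ xs)) (Fn g (pre @ ys))"
proof (induction xs ys arbitrary: pre rule: list_all2_induct)
  case (Cons x xs y ys)
  have "conv acs R (Fn g (pre @ x # xs)) (Fn g (pre @ y # xs))" using Cons(1) by (rule conv_Fn_arg)
  moreover have "conv acs R (Fn g ((pre @ [y]) @ xs)) (Fn g ((pre @ [y]) @ ys))" using Cons(3) .
  ultimately show ?case by (simp add: conv_trans)
qed (simp add: conv_refl)

lemma conv_inst: "(\<And>i. i \<in> pvars C \<Longrightarrow> conv acs R (\<sigma> i) (\<sigma>' i)) \<Longrightarrow> conv acs R (inst C \<sigma>) (inst C \<sigma>')"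
proof (induction C)
  case (PF g ps)
  have "list_all2 (conv acs R) (map (\<lambda>p. inst p \<sigma>) ps) (map (\<lambda>p. inst p \<sigma>') ps)"
    using PF by (auto simp: list_all2_map1 list_all2_map2 list_all2_same)
  then show ?case using conv_Fn_args[where pre="[]"] by simp
qed simp

lemma conv_normal_reduces_to:
  assumes "confluent_mod_ac acs R" and "conv acs R s t" and "normal_mod_ac acs R s"
  obtains t' where "(rstep_ac acs R)\<^sup>*\<^sup>* t t'" and "aceq acs s t'"
proof -
  obtain s' t' where "(rstep_ac acs R)\<^sup>*\<^sup>* s s'" "(rstep_ac acs R)\<^sup>*\<^sup>* t t'" "aceq acs s' t'"
    using assms(1,2) unfolding confluent_mod_ac_def by blast
  with assms(3) show ?thesis using normal_mod_ac_rtranclp that by blast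
qed

fun psubst :: "'f pat \<Rightarrow> (nat \<Rightarrow> 'f pat) \<Rightarrow> 'f pat" where
  "psubst (PV i) \<tau> = \<tau> i"
| "psubst (PF g ps) \<tau> = PF g (map (\<lambda>p. psubst p \<tau>) ps)"

lemma inst_psubst: "inst (psubst C \<tau>) \<rho> = inst C (\<lambda>i. inst (\<tau> i) \<rho>)"
  by (induction C) auto

lemma pvars_psubst: "pvars (psubst C \<tau>) = (\<Union>i\<in>pvars C. pvars (\<tau> i))"
  by (induction C) auto

lemma pat_wf_psubst: "pat_wf ar C \<Longrightarrow> (\<forall>i\<in>pvars C. pat_wf ar (\<tau> i)) \<Longrightarrow> pat_wf ar (psubst C \<tau>)"
  by (induction C) auto

lemma id_ok_mem: "A \<in> \<Gamma> \<Longrightarrow> id_ok ar acs R \<Gamma> A"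
  unfolding id_ok_def by (rule exI[of _ "PV 0"], rule exI[of _ "\<lambda>_. A"]) (simp add: conv_refl)

lemma id_ok_mono: "id_ok ar acs R \<Gamma> M \<Longrightarrow> \<Gamma> \<subseteq> \<Gamma>' \<Longrightarrow> id_ok ar acs R \<Gamma>' M"
  unfolding id_ok_def by blast

lemma id_ok_conv: "conv acs R M M' \<Longrightarrow> id_ok ar acs R \<Gamma> M' \<Longrightarrow> id_ok ar acs R \<Gamma> M"
  unfolding id_ok_def by (meson conv_trans)

lemma id_ok_aceq_cover:
  assumes "id_ok ar acs R \<Gamma> M" and "\<forall>x\<in>\<Gamma>. \<exists>y\<in>\<Gamma>'. aceq acs x y"
  shows "id_ok ar acs R \<Gamma>' M"
proof -
  from assms(1) obtain C \<sigma>
    where C: "pat_wf ar C" "\<forall>i\<in>pvars C. \<sigma> i \<in> \<Gamma>" "conv acs R M (inst C \<sigma>)"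
    unfolding id_ok_def by blast
  define \<sigma>' where "\<sigma>' i = (SOME y. y \<in> \<Gamma>' \<and> aceq acs (\<sigma> i) y)" for i
  have \<sigma>': "\<sigma>' i \<in> \<Gamma>' \<and> aceq acs (\<sigma> i) (\<sigma>' i)" if "i \<in> pvars C" for i
    unfolding \<sigma>'_def by (rule someI_ex) (use assms(2) C(2) that in blast)
  have "conv acs R (inst C \<sigma>) (inst C \<sigma>')" by (rule conv_inst) (use \<sigma>' aceq_conv in blast)
  then show ?thesis unfolding id_ok_def using C \<sigma>' by (meson conv_trans)
qed

text \<open>Composition of E-contexts: the holes filled with M receive a context for M;
  even and odd hole numbers keep the two contexts apart.\<close>

lemma id_ok_trans:
  assumes "id_ok ar acs R \<Gamma> M" and "id_ok ar acs R (insert M \<Gamma>) T"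
  shows "id_ok ar acs R \<Gamma> T"
proof -
  from assms(2) obtain C \<sigma>
    where C: "pat_wf ar C" "\<forall>i\<in>pvars C. \<sigma> i \<in> insert M \<Gamma>" "conv acs R T (inst C \<sigma>)"
    unfolding id_ok_def by blast
  from assms(1) obtain C' \<sigma>'
    where C': "pat_wf ar C'" "\<forall>i\<in>pvars C'. \<sigma>' i \<in> \<Gamma>" "conv acs R M (inst C' \<sigma>')"
    unfolding id_ok_def by blast
  define \<tau> where "\<tau> i = (if \<sigma> i \<in> \<Gamma> then PV (2*i) else psubst C' (\<lambda>j. PV (2*j+1)))" for i
  define \<rho> where "\<rho> k = (if even k then \<sigma> (k div 2) else \<sigma>' (k div 2))" for k
  have "conv acs R (\<sigma> i) (inst (\<tau> i) \<rho>)" if "i \<in> pvars C" for i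
    using that C(2) C'(3) by (auto simp: \<tau>_def \<rho>_def inst_psubst conv_refl)
  then have "conv acs R (inst C \<sigma>) (inst (psubst C \<tau>) \<rho>)"
    unfolding inst_psubst by (rule conv_inst)
  moreover have "pat_wf ar (psubst C \<tau>)"
    using C(1) C'(1) by (auto simp: \<tau>_def intro!: pat_wf_psubst)
  moreover have "\<forall>k\<in>pvars (psubst C \<tau>). \<rho> k \<in> \<Gamma>"
    using C(2) C'(2) by (auto simp: pvars_psubst \<tau>_def \<rho>_def split: if_splits)
  ultimately show ?thesis unfolding id_ok_def using C(3) conv_trans by blast
qed

section \<open>E-rewriting creates no guarded subterms\<close>

lemma inst_guarded_subterm:
  "subterm u (inst p \<sigma>) \<Longrightarrow> guarded u \<Longrightarrow> \<exists>i\<in>pvars p. subterm u (\<sigma> i)"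
  by (induction p) fastforce+

lemma subterm_inst_var: "i \<in> pvars p \<Longrightarrow> subterm (\<sigma> i) (inst p \<sigma>)"
  by (induction p) (auto intro: st_refl)

definition guarded_subterms_normal :: "'f set \<Rightarrow> ('f pat \<times> 'f pat) set \<Rightarrow> 'f trm \<Rightarrow> bool" where
  "guarded_subterms_normal acs R s \<longleftrightarrow> (\<forall>u. subterm u s \<longrightarrow> guarded u \<longrightarrow> normal_mod_ac acs R u)"

inductive rstep_outer :: "('f pat \<times> 'f pat) set \<Rightarrow> 'f trm \<Rightarrow> 'f trm \<Rightarrow> bool" for R where
  rso_root: "(l, r) \<in> R \<Longrightarrow> rstep_outer R (inst l \<sigma>) (inst r \<sigma>)"
| rso_fn: "rstep_outer R s t \<Longrightarrow> rstep_outer R (Fn g (xs @ s # ys)) (Fn g (xs @ t # ys))"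

lemma rstep_guarded_not_guarded_subterms_normal:
  "rstep R s t \<Longrightarrow> guarded s \<Longrightarrow> \<not> guarded_subterms_normal acs R s"
  unfolding guarded_subterms_normal_def using rstep_not_normal st_refl by blast

lemma rstep_outer_if_guarded_subterms_normal:
  "rstep R s t \<Longrightarrow> guarded_subterms_normal acs R s \<Longrightarrow> rstep_outer R s t"
proof (induction rule: rstep.induct)
  case (rs_root l r \<sigma>) then show ?case by (blast intro: rso_root)
next
  case (rs_fn s t g xs ys)
  then have "guarded_subterms_normal acs R s"
    unfolding guarded_subterms_normal_def by (meson subterm_trans st_fn in_set_conv_decomp)
  then show ?case using rs_fn by (blast intro: rso_fn)
qed (metis rstep_guarded_not_guarded_subterms_normal rstep.intros guarded.simps)+

lemma rstep_outer_guarded_subterm: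
  assumes "\<forall>(l, r)\<in>R. pvars r \<subseteq> pvars l"
  shows "rstep_outer R s t \<Longrightarrow> subterm u t \<Longrightarrow> guarded u \<Longrightarrow> subterm u s"
proof (induction rule: rstep_outer.induct)
  case (rso_root l r \<sigma>)
  then obtain i where "i \<in> pvars r" "subterm u (\<sigma> i)" using inst_guarded_subterm by blast
  with rso_root assms show ?case by (blast intro: subterm_trans subterm_inst_var)
qed auto

definition guarded_subterms_in :: "'f set \<Rightarrow> 'f trm set \<Rightarrow> 'f trm \<Rightarrow> bool" where
  "guarded_subterms_in acs S t \<longleftrightarrow> (\<forall>u. subterm u t \<longrightarrow> guarded u \<longrightarrow> (\<exists>v\<in>S. aceq acs u v))"

lemma guarded_subterms_in_aceq:
  "guarded_subterms_in acs S s \<Longrightarrow> aceq acs s t \<Longrightarrow> guarded_subterms_in acs S t"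
  unfolding guarded_subterms_in_def
proof (intro allI impI)
  fix u assume I: "\<forall>u. subterm u s \<longrightarrow> guarded u \<longrightarrow> (\<exists>v\<in>S. aceq acs u v)"
    and "aceq acs s t" "subterm u t" "guarded u"
  then obtain u' where u': "subterm u' s" "aceq acs u' u"
    using guarded_subterms_aceq_left by blast
  with I \<open>guarded u\<close> obtain v where "v \<in> S" "aceq acs u' v" using aceq_guarded by blast
  then show "\<exists>v\<in>S. aceq acs u v" using u'(2) by (blast intro: aceq.ac_trans aceq.ac_sym)
qed

lemma guarded_subterms_in_normal:
  "guarded_subterms_in acs S s \<Longrightarrow> \<forall>v\<in>S. normal_mod_ac acs R v \<Longrightarrow> guarded_subterms_normal acs R s"
  unfolding guarded_subterms_in_def guarded_subterms_normal_def
  by (meson aceq.ac_sym normal_mod_ac_aceq)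

lemma guarded_subterms_in_inst:
  "\<forall>i\<in>pvars C. \<sigma> i \<in> \<Gamma> \<Longrightarrow> guarded_subterms_in acs {v. \<exists>w\<in>\<Gamma>. subterm v w} (inst C \<sigma>)"
  unfolding guarded_subterms_in_def by (blast dest: inst_guarded_subterm intro: aceq.ac_refl)

text \<open>A rewrite step on a term whose guarded subterms are normal takes place above
  them, so it creates no new guarded subterms.\<close>

lemma guarded_subterms_in_rstep_ac:
  assumes "\<forall>(l, r)\<in>R. pvars r \<subseteq> pvars l" and "\<forall>v\<in>S. normal_mod_ac acs R v"
    and "rstep_ac acs R s t" and "guarded_subterms_in acs S s"
  shows "guarded_subterms_in acs S t"
proof -
  obtain s' t' where st: "aceq acs s s'" "rstep R s' t'" "aceq acs t' t"
    using assms(3) unfolding rstep_ac_def by blast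
  have "guarded_subterms_in acs S s'" using assms(4) st(1) by (rule guarded_subterms_in_aceq)
  moreover have "rstep_outer R s' t'"
    using st(2) guarded_subterms_in_normal[OF calculation assms(2)]
    by (rule rstep_outer_if_guarded_subterms_normal)
  ultimately have "guarded_subterms_in acs S t'"
    unfolding guarded_subterms_in_def using rstep_outer_guarded_subterm[OF assms(1)] by blast
  then show ?thesis using st(3) by (rule guarded_subterms_in_aceq)
qed

lemma guarded_subterms_in_rtranclp:
  assumes "\<forall>(l, r)\<in>R. pvars r \<subseteq> pvars l" and "\<forall>v\<in>S. normal_mod_ac acs R v"
  shows "(rstep_ac acs R)\<^sup>*\<^sup>* s t \<Longrightarrow> guarded_subterms_in acs S s \<Longrightarrow> guarded_subterms_in acs S t"
  by (induction rule: rtranclp_induct) (use guarded_subterms_in_rstep_ac[OF assms] in blast)+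

lemma normal_subterms:
  "\<forall>w\<in>\<Gamma>. normal_mod_ac acs R w \<Longrightarrow> \<forall>v\<in>{v. \<exists>w\<in>\<Gamma>. subterm v w}. normal_mod_ac acs R v"
  using normal_mod_ac_subterm by blast

text \<open>E-rewriting creates no guarded terms, so a normal term in the E-closure of \<Gamma>
  has no guarded subterms besides those of \<Gamma> (up to AC).\<close>

lemma id_ok_guarded_subterm:
  assumes "\<forall>(l, r)\<in>R. pvars r \<subseteq> pvars l" and "confluent_mod_ac acs R"
    and "\<forall>w\<in>\<Gamma>. normal_mod_ac acs R w" and "normal_mod_ac acs R M" and "id_ok ar acs R \<Gamma> M"
    and "subterm u M" and "guarded u"
  shows "\<exists>w\<in>\<Gamma>. \<exists>v. subterm v w \<and> aceq acs u v"
proof -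
  from assms(5) obtain C \<sigma> where C: "\<forall>i\<in>pvars C. \<sigma> i \<in> \<Gamma>" "conv acs R M (inst C \<sigma>)"
    unfolding id_ok_def by blast
  obtain t' where t': "(rstep_ac acs R)\<^sup>*\<^sup>* (inst C \<sigma>) t'" "aceq acs M t'"
    using conv_normal_reduces_to[OF assms(2) C(2) assms(4)] .
  have "guarded_subterms_in acs {v. \<exists>w\<in>\<Gamma>. subterm v w} t'"
    using guarded_subterms_in_rtranclp[OF assms(1) normal_subterms[OF assms(3)] t'(1)]
      guarded_subterms_in_inst[OF C(1)] by blast
  then have "guarded_subterms_in acs {v. \<exists>w\<in>\<Gamma>. subterm v w} M"
    using t'(2) aceq.ac_sym guarded_subterms_in_aceq by blast
  then show ?thesis using assms(6,7) unfolding guarded_subterms_in_def by blast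
qed

section \<open>Replacing a guarded term\<close>

fun replace_ac :: "'f set \<Rightarrow> 'f trm \<Rightarrow> 'f trm \<Rightarrow> 'f trm \<Rightarrow> 'f trm" where
  "replace_ac acs P Q (Nm n) = (if aceq acs (Nm n) P then Q else Nm n)"
| "replace_ac acs P Q (Vr n) = (if aceq acs (Vr n) P then Q else Vr n)"
| "replace_ac acs P Q (Pub a) = (if aceq acs (Pub a) P then Q else Pub (replace_ac acs P Q a))"
| "replace_ac acs P Q (Sign a b) =
    (if aceq acs (Sign a b) P then Q else Sign (replace_ac acs P Q a) (replace_ac acs P Q b))"
| "replace_ac acs P Q (Blind a b) =
    (if aceq acs (Blind a b) P then Q else Blind (replace_ac acs P Q a) (replace_ac acs P Q b))"
| "replace_ac acs P Q (Pair a b) =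
    (if aceq acs (Pair a b) P then Q else Pair (replace_ac acs P Q a) (replace_ac acs P Q b))"
| "replace_ac acs P Q (Enc a b) =
    (if aceq acs (Enc a b) P then Q else Enc (replace_ac acs P Q a) (replace_ac acs P Q b))"
| "replace_ac acs P Q (Fn g ts) =
    (if aceq acs (Fn g ts) P then Q else Fn g (map (replace_ac acs P Q) ts))"

lemma replace_ac_Fn: "guarded P \<Longrightarrow> replace_ac acs P Q (Fn g ts) = Fn g (map (replace_ac acs P Q) ts)"
  using aceq_guarded[of acs "Fn g ts" P] by auto

lemma replace_ac_inst:
  "guarded P \<Longrightarrow> replace_ac acs P Q (inst p \<sigma>) = inst p (\<lambda>i. replace_ac acs P Q (\<sigma> i))"
  by (induction p) (simp_all add: replace_ac_Fn del: replace_ac.simps(8))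

lemma replace_ac_self: "replace_ac acs P Q P = Q"
  by (cases P) (auto simp: ac_refl)

lemma replace_ac_id: "(\<forall>u. subterm u t \<longrightarrow> \<not> aceq acs u P) \<Longrightarrow> replace_ac acs P Q t = t"
  by (induction t) (auto intro: map_idI)

lemma replace_ac_aceq:
  "aceq acs s t \<Longrightarrow> guarded P \<Longrightarrow> aceq acs (replace_ac acs P Q s) (replace_ac acs P Q t)"
proof (induction rule: aceq.induct)
  case (ac_pub s t)
  then have "aceq acs (Pub s) P \<longleftrightarrow> aceq acs (Pub t) P" by (meson aceq.intros)
  then show ?case using ac_pub by (auto intro: aceq.ac_refl aceq.ac_pub)
next
  case (ac_sign s t u v)
  then have "aceq acs (Sign s u) P \<longleftrightarrow> aceq acs (Sign t v) P" by (meson aceq.intros)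
  then show ?case using ac_sign by (auto intro: aceq.ac_refl aceq.ac_sign)
next
  case (ac_blind s t u v)
  then have "aceq acs (Blind s u) P \<longleftrightarrow> aceq acs (Blind t v) P" by (meson aceq.intros)
  then show ?case using ac_blind by (auto intro: aceq.ac_refl aceq.ac_blind)
next
  case (ac_pair s t u v)
  then have "aceq acs (Pair s u) P \<longleftrightarrow> aceq acs (Pair t v) P" by (meson aceq.intros)
  then show ?case using ac_pair by (auto intro: aceq.ac_refl aceq.ac_pair)
next
  case (ac_enc s t u v)
  then have "aceq acs (Enc s u) P \<longleftrightarrow> aceq acs (Enc t v) P" by (meson aceq.intros)
  then show ?case using ac_enc by (auto intro: aceq.ac_refl aceq.ac_enc)
qed (auto simp: replace_ac_Fn simp del: replace_ac.simps(8) intro: aceq.intros)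

lemma replace_ac_rstep_outer:
  "rstep_outer R s t \<Longrightarrow> guarded P \<Longrightarrow> rstep R (replace_ac acs P Q s) (replace_ac acs P Q t)"
  by (induction rule: rstep_outer.induct)
    (auto simp: replace_ac_inst replace_ac_Fn simp del: replace_ac.simps(8) intro: rstep.intros)

lemma replace_ac_conv:
  assumes "\<forall>(l, r)\<in>R. pvars r \<subseteq> pvars l" and "\<forall>v\<in>S. normal_mod_ac acs R v" and "guarded P"
  shows "(rstep_ac acs R)\<^sup>*\<^sup>* s t \<Longrightarrow> guarded_subterms_in acs S s
     \<Longrightarrow> conv acs R (replace_ac acs P Q s) (replace_ac acs P Q t)"
proof (induction rule: rtranclp_induct)
  case (step y z)
  obtain y' z' where st: "aceq acs y y'" "rstep R y' z'" "aceq acs z' z"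
    using step(2) unfolding rstep_ac_def by blast
  have "guarded_subterms_in acs S y'"
    using guarded_subterms_in_rtranclp[OF assms(1,2) step(1,4)] st(1)
      by (rule guarded_subterms_in_aceq)
  then have "rstep_outer R y' z'"
    using st(2) guarded_subterms_in_normal assms(2) rstep_outer_if_guarded_subterms_normal by blast
  then have "rstep R (replace_ac acs P Q y') (replace_ac acs P Q z')"
    using assms(3) by (rule replace_ac_rstep_outer)
  with st assms(3) have "conv acs R (replace_ac acs P Q y) (replace_ac acs P Q z)"
    by (meson conv_trans rstep_conv aceq_conv replace_ac_aceq)
  then show ?case using step(3,4) conv_trans by blast
qed (simp add: conv_refl)

text \<open>Since P does not occur in T, replacing P by Q along the conversion of T into
  C[\<sigma>] leaves T unchanged and puts T into the E-closure of \<Gamma> and Q.\<close>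

lemma id_ok_replace:
  assumes "\<forall>(l, r)\<in>R. pvars r \<subseteq> pvars l" and "confluent_mod_ac acs R"
    and "\<forall>w\<in>insert P \<Gamma>. normal_mod_ac acs R w" and "normal_mod_ac acs R T" and "guarded P"
    and "id_ok ar acs R (insert P \<Gamma>) T" and "id_ok ar acs R \<Gamma> Q"
    and P_fresh: "\<forall>w\<in>insert T \<Gamma>. \<forall>v. subterm v w \<longrightarrow> \<not> aceq acs v P"
  shows "id_ok ar acs R \<Gamma> T"
proof -
  from assms(6) obtain C \<sigma>
    where C: "pat_wf ar C" "\<forall>i\<in>pvars C. \<sigma> i \<in> insert P \<Gamma>" "conv acs R T (inst C \<sigma>)"
    unfolding id_ok_def by blast
  obtain t' where t': "(rstep_ac acs R)\<^sup>*\<^sup>* (inst C \<sigma>) t'" "aceq acs T t'"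
    using conv_normal_reduces_to[OF assms(2) C(3) assms(4)] .
  let ?r = "replace_ac acs P Q"
  have "conv acs R (?r (inst C \<sigma>)) (?r t')"
    using replace_ac_conv[OF assms(1) normal_subterms[OF assms(3)] assms(5) t'(1)]
      guarded_subterms_in_inst[OF C(2)] by blast
  moreover have "aceq acs (?r T) (?r t')" using replace_ac_aceq[OF t'(2) assms(5)] .
  moreover have "?r T = T" using P_fresh by (intro replace_ac_id) blast
  ultimately have "conv acs R T (?r (inst C \<sigma>))"
    using aceq_conv conv_sym conv_trans by metis
  then have "conv acs R T (inst C (\<lambda>i. ?r (\<sigma> i)))"
    by (simp only: replace_ac_inst[OF assms(5)])
  moreover have "?r (\<sigma> i) \<in> insert Q \<Gamma>" if "i \<in> pvars C" for i
  proof (cases "\<sigma> i = P")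
    case False
    then have "\<sigma> i \<in> \<Gamma>" using that C(2) by blast
    then show ?thesis using P_fresh replace_ac_id[of "\<sigma> i" acs P Q] by simp
  qed (simp add: replace_ac_self)
  ultimately have "id_ok ar acs R (insert Q \<Gamma>) T"
    unfolding id_ok_def using C(1) by (intro exI[of _ C] exI[of _ "\<lambda>i. ?r (\<sigma> i)"]) blast
  then show ?thesis using assms(7) id_ok_trans by blast
qed

lemma derS_is_seq: "derS ar acs R c \<Gamma> M \<Longrightarrow> is_seq ar acs R \<Gamma> M"
  by (induction rule: derS.induct) auto

lemma derS_wf_nf: "derS ar acs R c \<Gamma> M \<Longrightarrow> wf_nf ar acs R M"
  using derS_is_seq is_seq_iff by blast

abbreviation ac_covered :: "'f set \<Rightarrow> 'f trm set \<Rightarrow> 'f trm set \<Rightarrow> bool" where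
  "ac_covered acs \<Gamma> \<Gamma>' \<equiv> \<forall>x\<in>\<Gamma>. \<exists>y\<in>\<Gamma>'. aceq acs x y"

lemma derS_ac_covered:
  "derS ar acs R c \<Gamma> T \<Longrightarrow> ac_covered acs \<Gamma> \<Gamma>' \<Longrightarrow> aceq acs T T' \<Longrightarrow> is_seq ar acs R \<Gamma>' T'
   \<Longrightarrow> derS ar acs R c \<Gamma>' T'"
proof (induction arbitrary: \<Gamma>' T' rule: derS.induct)
  case (r_id \<Gamma> M c)
  then have "id_ok ar acs R \<Gamma>' T'"
    using id_ok_aceq_cover id_ok_conv aceq_conv aceq.ac_sym by metis
  then show ?case using r_id by (blast intro: derS.r_id)
next
  case (r_cut \<Gamma> T M)
  have M: "wf_nf ar acs R M" using r_cut.hyps(2) by (rule derS_wf_nf)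
  then have "derS ar acs R True \<Gamma>' M"
    using r_cut by (blast intro: aceq.ac_refl is_seq_concl)
  moreover have "derS ar acs R True (insert M \<Gamma>') T'"
    using r_cut M by (intro r_cut.IH(2)) (auto intro: aceq.ac_refl)
  ultimately show ?case using r_cut.prems(3) by (blast intro: derS.r_cut)
next
  case (r_pL M N \<Gamma> T c)
  obtain M' N' where P': "Pair M' N' \<in> \<Gamma>'" "aceq acs M M'" "aceq acs N N'"
    using r_pL.prems(1) by (blast dest: aceq_constructorD)
  then have "derS ar acs R c (\<Gamma>' \<union> {Pair M' N', M', N'}) T'"
    using r_pL by (intro r_pL.IH) (auto dest: wf_nf_argsD is_seq_memD intro: aceq.ac_refl)
  then show ?case
    using r_pL.prems P' derS.r_pL[of ar acs R M' N' \<Gamma>' T' c] by (simp add: insert_absorb)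
next
  case (r_pR \<Gamma> M N c)
  obtain M' N' where T': "T' = Pair M' N'" "aceq acs M M'" "aceq acs N N'"
    using r_pR.prems(2) by (blast dest: aceq_constructorD)
  with r_pR.prems(3) have "is_seq ar acs R \<Gamma>' M'" "is_seq ar acs R \<Gamma>' N'"
    by (auto simp: is_seq_iff dest: wf_nf_argsD)
  with r_pR T' show ?case by (metis derS.r_pR)
next
  case (r_eL M K \<Gamma> N c)
  obtain M' K' where P': "Enc M' K' \<in> \<Gamma>'" "aceq acs M M'" "aceq acs K K'"
    using r_eL.prems(1) by (blast dest: aceq_constructorD)
  have M'K': "wf_nf ar acs R M'" "wf_nf ar acs R K'"
    using is_seq_memD[OF r_eL.prems(3) P'(1)] by (auto dest: wf_nf_argsD)
  then have "derS ar acs R c \<Gamma>' K'"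
    using r_eL.prems P' by (intro r_eL.IH(1)) (simp_all add: is_seq_concl)
  moreover have "derS ar acs R c (\<Gamma>' \<union> {Enc M' K', M', K'}) T'"
  proof (rule r_eL.IH(2))
    show "ac_covered acs (\<Gamma> \<union> {Enc M K, M, K}) (\<Gamma>' \<union> {Enc M' K', M', K'})"
      using r_eL.prems(1) P' by blast
  qed (use r_eL.prems(2,3) P'(1) M'K' in \<open>simp_all add: insert_absorb\<close>)
  ultimately show ?case
    using r_eL.prems P' derS.r_eL[of ar acs R M' K' \<Gamma>' T' c] by (simp add: insert_absorb)
next
  case (r_eR \<Gamma> M K c)
  obtain M' K' where T': "T' = Enc M' K'" "aceq acs M M'" "aceq acs K K'"
    using r_eR.prems(2) by (blast dest: aceq_constructorD)
  with r_eR.prems(3) have "is_seq ar acs R \<Gamma>' M'" "is_seq ar acs R \<Gamma>' K'"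
    by (auto simp: is_seq_iff dest: wf_nf_argsD)
  with r_eR T' show ?case by (metis derS.r_eR)
next
  case (r_signL K L \<Gamma> M N c)
  obtain M' K' where S': "Sign M' K' \<in> \<Gamma>'" "aceq acs M M'" "aceq acs K K'"
    using r_signL.prems(1) by (blast dest: aceq_constructorD)
  obtain L' where L': "Pub L' \<in> \<Gamma>'" "aceq acs L L'"
    using r_signL.prems(1) by (blast dest: aceq_constructorD)
  have KL': "aceq acs K' L'" using S'(3) L'(2) r_signL.hyps(1) by (blast intro: ac_trans ac_sym)
  have M': "wf_nf ar acs R M'"
    using is_seq_memD[OF r_signL.prems(3) S'(1)] by (auto dest: wf_nf_argsD)
  have "derS ar acs R c (\<Gamma>' \<union> {Sign M' K', Pub L', M'}) T'"
  proof (rule r_signL.IH)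
    show "ac_covered acs (\<Gamma> \<union> {Sign M K, Pub L, M}) (\<Gamma>' \<union> {Sign M' K', Pub L', M'})"
      using r_signL.prems(1) S' by blast
  qed (use r_signL.prems(2,3) M' S'(1) L'(1) in \<open>simp_all add: insert_absorb\<close>)
  moreover have "\<Gamma>' \<union> {Sign M' K', Pub L'} = \<Gamma>'" using S'(1) L'(1) by blast
  ultimately show ?case using r_signL.prems(3) derS.r_signL[OF KL', of ar R \<Gamma>' M' T' c] by simp
next
  case (r_signR \<Gamma> M K c)
  obtain M' K' where T': "T' = Sign M' K'" "aceq acs M M'" "aceq acs K K'"
    using r_signR.prems(2) by (blast dest: aceq_constructorD)
  with r_signR.prems(3) have "is_seq ar acs R \<Gamma>' M'" "is_seq ar acs R \<Gamma>' K'"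
    by (auto simp: is_seq_iff dest: wf_nf_argsD)
  with r_signR T' show ?case by (metis derS.r_signR)
next
  case (r_blindL1 M K \<Gamma> N c)
  obtain M' K' where P': "Blind M' K' \<in> \<Gamma>'" "aceq acs M M'" "aceq acs K K'"
    using r_blindL1.prems(1) by (blast dest: aceq_constructorD)
  have M'K': "wf_nf ar acs R M'" "wf_nf ar acs R K'"
    using is_seq_memD[OF r_blindL1.prems(3) P'(1)] by (auto dest: wf_nf_argsD)
  have "derS ar acs R c \<Gamma>' K'"
    using r_blindL1.prems P' M'K' by (intro r_blindL1.IH(1)) (simp_all add: is_seq_concl)
  moreover have "derS ar acs R c (\<Gamma>' \<union> {Blind M' K', M', K'}) T'"
  proof (rule r_blindL1.IH(2))
    show "ac_covered acs (\<Gamma> \<union> {Blind M K, M, K}) (\<Gamma>' \<union> {Blind M' K', M', K'})"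
      using r_blindL1.prems(1) P' by blast
  qed (use r_blindL1.prems(2,3) P'(1) M'K' in \<open>simp_all add: insert_absorb\<close>)
  ultimately show ?case
    using r_blindL1.prems P' derS.r_blindL1[of ar acs R M' K' \<Gamma>' T' c] by (simp add: insert_absorb)
next
  case (r_blindR \<Gamma> M K c)
  obtain M' K' where T': "T' = Blind M' K'" "aceq acs M M'" "aceq acs K K'"
    using r_blindR.prems(2) by (blast dest: aceq_constructorD)
  with r_blindR.prems(3) have "is_seq ar acs R \<Gamma>' M'" "is_seq ar acs R \<Gamma>' K'"
    by (auto simp: is_seq_iff dest: wf_nf_argsD)
  with r_blindR T' show ?case by (metis derS.r_blindR)
next
  case (r_blindL2 M Rr K \<Gamma> N c)
  obtain B' K' where "Sign B' K' \<in> \<Gamma>'" "aceq acs (Blind M Rr) B'" "aceq acs K K'"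
    using r_blindL2.prems(1) by (blast dest: aceq_constructorD)
  then obtain M' Rr' where P': "Sign (Blind M' Rr') K' \<in> \<Gamma>'" "aceq acs M M'" "aceq acs Rr Rr'"
    and K': "aceq acs K K'" by (blast dest: aceq_constructorD)
  have Rr': "wf_nf ar acs R Rr'"
    using is_seq_memD[OF r_blindL2.prems(3) P'(1)] by (auto dest: wf_nf_argsD)
  have "aceq acs (Sign M K) (Sign M' K')" using P'(2) K' by (rule ac_sign)
  moreover have "wf_nf ar acs R (Sign M K)"
    using derS_is_seq[OF r_blindL2.hyps(3)] by (simp add: is_seq_iff)
  ultimately have S': "wf_nf ar acs R (Sign M' K')" by (rule wf_nf_aceq[rotated])
  have "derS ar acs R c \<Gamma>' Rr'"
    using r_blindL2.prems P' Rr' by (intro r_blindL2.IH(1)) (simp_all add: is_seq_concl)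
  moreover have "derS ar acs R c (\<Gamma>' \<union> {Sign (Blind M' Rr') K', Sign M' K', Rr'}) T'"
  proof (rule r_blindL2.IH(2))
    show "ac_covered acs (\<Gamma> \<union> {Sign (Blind M Rr) K, Sign M K, Rr})
        (\<Gamma>' \<union> {Sign (Blind M' Rr') K', Sign M' K', Rr'})"
      using r_blindL2.prems(1) P' \<open>aceq acs (Sign M K) (Sign M' K')\<close> by blast
  qed (use r_blindL2.prems(2,3) P'(1) Rr' S' in \<open>simp_all add: insert_absorb\<close>)
  ultimately show ?case
    using r_blindL2.prems P' derS.r_blindL2[of ar acs R M' Rr' K' \<Gamma>' T' c]
    by (simp add: insert_absorb)
next
  case (r_gs \<Gamma> M A c)
  obtain B where B: "B \<in> insert M \<Gamma>" "subterm A B" using r_gs.hyps(3) by blast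
  then obtain B' where B': "B' \<in> insert T' \<Gamma>'" "aceq acs B B'" using r_gs.prems(1,2) by blast
  then obtain A' where A': "subterm A' B'" "aceq acs A A'"
    using guarded_subterms_aceq_right B(2) r_gs.hyps(2) by blast
  have "guarded A'" using aceq_guarded A'(2) r_gs.hyps(2) by blast
  have A'_wf: "wf_nf ar acs R A'"
    using B' A'(1) r_gs.prems(3) by (auto simp: is_seq_iff intro: wf_nf_subterm)
  have "derS ar acs R c \<Gamma>' A'"
    using r_gs.prems A'(2) A'_wf by (intro r_gs.IH(1)) (simp_all add: is_seq_concl)
  moreover have "derS ar acs R c (insert A' \<Gamma>') T'"
    using r_gs.prems A'(2) A'_wf by (intro r_gs.IH(2)) auto
  ultimately show ?case using r_gs.prems(3) \<open>guarded A'\<close> B' A'(1) by (blast intro: derS.r_gs)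
qed

lemma derS_mono:
  assumes "derS ar acs R c \<Gamma> T" and "\<Gamma> \<subseteq> \<Gamma>'" and "is_seq ar acs R \<Gamma>' X"
  shows "derS ar acs R c \<Gamma>' T"
  using assms derS_wf_nf[OF assms(1)]
  by (intro derS_ac_covered[OF assms(1)]) (auto intro: ac_refl simp: is_seq_iff)

lemma derS_id_ok_exists: "derS ar acs R c \<Gamma> X \<Longrightarrow> \<exists>Q. id_ok ar acs R \<Gamma> Q"
  by (induction rule: derS.induct) (auto intro: id_ok_mem)

section \<open>Cut admissibility\<close>

text \<open>A cut on a term AC-equal to a guarded subterm of the conclusion sequent is an
  instance of the guarded-subterm rule.\<close>

lemma cut_guarded_subterm:
  assumes "derS ar acs R False \<Gamma> A" and "derS ar acs R False (insert A \<Gamma>) T"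
    and "guarded A" and "w \<in> insert T \<Gamma>" and "subterm v w" and "aceq acs A v"
  shows "derS ar acs R False \<Gamma> T"
proof -
  have seq: "is_seq ar acs R \<Gamma> T" using derS_is_seq[OF assms(2)] by simp
  have v: "wf_nf ar acs R v"
    using seq assms(4,5) by (auto simp: is_seq_iff intro: wf_nf_subterm)
  have "derS ar acs R False \<Gamma> v"
    using seq v by (intro derS_ac_covered[OF assms(1) _ assms(6)]) (auto intro: ac_refl is_seq_concl)
  moreover have "derS ar acs R False (insert v \<Gamma>) T"
    using assms(2,6) seq v by (auto intro!: derS_ac_covered[OF assms(2)] ac_refl)
  ultimately show ?thesis
    using seq assms(3-6) aceq_guarded by (blast intro: derS.r_gs)
qed

lemma cut_guarded_subterm_id_ok:
  assumes "\<forall>(l, r)\<in>R. pvars r \<subseteq> pvars l" and "confluent_mod_ac acs R"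
    and "id_ok ar acs R \<Gamma> P" and "is_seq ar acs R \<Gamma> P" and "subterm A P" and "guarded A"
    and "derS ar acs R False \<Gamma> A" and "derS ar acs R False (insert A \<Gamma>) T"
  shows "derS ar acs R False \<Gamma> T"
proof -
  obtain w v where "w \<in> \<Gamma>" "subterm v w" "aceq acs A v"
    using id_ok_guarded_subterm[OF assms(1,2) _ _ assms(3,5,6)] assms(4)
    by (auto simp: is_seq_iff wf_nf_def)
  then show ?thesis using cut_guarded_subterm[OF assms(7,8,6)] by blast
qed

text \<open>The premises of the right rule concluding P; there is no right rule for Pub.\<close>

fun components_derivable ::
  "('f \<Rightarrow> nat) \<Rightarrow> 'f set \<Rightarrow> ('f pat \<times> 'f pat) set \<Rightarrow> 'f trm set \<Rightarrow> 'f trm \<Rightarrow> bool" where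
  "components_derivable ar acs R \<Gamma> (Pair a b) = (derS ar acs R False \<Gamma> a \<and> derS ar acs R False \<Gamma> b)"
| "components_derivable ar acs R \<Gamma> (Enc a b) = (derS ar acs R False \<Gamma> a \<and> derS ar acs R False \<Gamma> b)"
| "components_derivable ar acs R \<Gamma> (Sign a b) = (derS ar acs R False \<Gamma> a \<and> derS ar acs R False \<Gamma> b)"
| "components_derivable ar acs R \<Gamma> (Blind a b) = (derS ar acs R False \<Gamma> a \<and> derS ar acs R False \<Gamma> b)"
| "components_derivable ar acs R \<Gamma> _ = False"

lemma components_derivable_guarded: "components_derivable ar acs R \<Gamma> P \<Longrightarrow> guarded P"
  by (cases P) auto

text \<open>A cut on P is reduced by analysing its right premise when the left premise ends
  in a right rule, or in the identity rule with P unguarded.\<close>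

definition right_principal ::
  "('f \<Rightarrow> nat) \<Rightarrow> 'f set \<Rightarrow> ('f pat \<times> 'f pat) set \<Rightarrow> 'f trm set \<Rightarrow> 'f trm \<Rightarrow> bool" where
  "right_principal ar acs R \<Gamma> P \<longleftrightarrow> derS ar acs R False \<Gamma> P \<and>
     (components_derivable ar acs R \<Gamma> P \<or> (\<not> guarded P \<and> id_ok ar acs R \<Gamma> P))"

lemma right_principal_components:
  "right_principal ar acs R \<Gamma> P \<Longrightarrow> guarded P \<Longrightarrow> components_derivable ar acs R \<Gamma> P"
  unfolding right_principal_def by blast

lemma right_principal_mono:
  assumes "right_principal ar acs R \<Gamma> P" and "\<Gamma> \<subseteq> \<Gamma>'" and "is_seq ar acs R \<Gamma>' X"
  shows "right_principal ar acs R \<Gamma>' P"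
proof -
  have "components_derivable ar acs R \<Gamma>' P" if "components_derivable ar acs R \<Gamma> P"
    using that assms(2,3) by (cases P) (auto intro: derS_mono)
  then show ?thesis
    using assms unfolding right_principal_def by (blast intro: derS_mono id_ok_mono)
qed

definition cut_admissible_below :: "('f \<Rightarrow> nat) \<Rightarrow> 'f set \<Rightarrow> ('f pat \<times> 'f pat) set \<Rightarrow> nat \<Rightarrow> bool" where
  "cut_admissible_below ar acs R n \<longleftrightarrow> (\<forall>X \<Gamma> T. size X < n \<longrightarrow>
     derS ar acs R False \<Gamma> X \<longrightarrow> derS ar acs R False (insert X \<Gamma>) T \<longrightarrow> derS ar acs R False \<Gamma> T)"

lemma cut_admissible_belowD:
  "cut_admissible_below ar acs R n \<Longrightarrow> size X < n \<Longrightarrow> derS ar acs R False \<Gamma> X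
   \<Longrightarrow> derS ar acs R False (insert X \<Gamma>) T \<Longrightarrow> derS ar acs R False \<Gamma> T"
  unfolding cut_admissible_below_def by blast

lemma cut_two_below:
  assumes cut: "cut_admissible_below ar acs R n" and "size M < n" "size N < n"
    and M: "derS ar acs R False \<Gamma> M" and N: "derS ar acs R False \<Gamma> N"
    and T: "derS ar acs R False (\<Gamma> \<union> {M, N}) T"
  shows "derS ar acs R False \<Gamma> T"
proof -
  have "is_seq ar acs R (insert M \<Gamma>) N"
    using derS_is_seq[OF N] derS_wf_nf[OF M] by simp
  then have "derS ar acs R False (insert M \<Gamma>) N" using derS_mono[OF N] by blast
  moreover have "derS ar acs R False (insert N (insert M \<Gamma>)) T"
    using T by (simp add: insert_commute)
  ultimately have "derS ar acs R False (insert M \<Gamma>) T"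
    using cut_admissible_belowD[OF cut \<open>size N < n\<close>] by blast
  then show ?thesis using cut_admissible_belowD[OF cut \<open>size M < n\<close> M] by blast
qed

text \<open>Principal case of the second blinding rule: M is recovered from Blind M Rr and
  Rr by the first blinding rule, after which Sign M K is rebuilt.\<close>

lemma cut_sign_blind:
  assumes cut: "cut_admissible_below ar acs R (size (Sign (Blind M Rr) K))"
    and B: "derS ar acs R False \<Gamma> (Blind M Rr)" and K: "derS ar acs R False \<Gamma> K"
    and Rr: "derS ar acs R False \<Gamma> Rr" and N: "derS ar acs R False (\<Gamma> \<union> {Sign M K, Rr}) N"
  shows "derS ar acs R False \<Gamma> N"
proof -
  have B_wf: "wf_nf ar acs R (Blind M Rr)" and M_wf: "wf_nf ar acs R M"
    using derS_wf_nf[OF B] by (auto dest: wf_nf_argsD)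
  have seq: "is_seq ar acs R (insert (Blind M Rr) \<Gamma>) M"
    using derS_is_seq[OF B] B_wf M_wf by (simp add: is_seq_iff)
  have "derS ar acs R False (insert (Blind M Rr) \<Gamma>) Rr" using derS_mono[OF Rr _ seq] by blast
  moreover have "derS ar acs R False (\<Gamma> \<union> {Blind M Rr, M, Rr}) M"
    using seq M_wf derS_wf_nf[OF Rr] by (intro derS.r_id id_ok_mem) auto
  ultimately have "derS ar acs R False (insert (Blind M Rr) \<Gamma>) M" by (rule derS.r_blindL1[OF seq])
  then have "derS ar acs R False \<Gamma> M" using cut_admissible_belowD[OF cut _ B] by simp
  then have "derS ar acs R False \<Gamma> (Sign M K)"
    using derS_is_seq[OF K] derS_is_seq[OF N] \<open>derS ar acs R False \<Gamma> M\<close> K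
    by (auto intro!: derS.r_signR simp: is_seq_iff)
  then show ?thesis using cut_two_below[OF cut _ _ _ Rr N] by simp
qed

lemma cut_id_right_principal:
  assumes "\<forall>(l, r)\<in>R. pvars r \<subseteq> pvars l" and "confluent_mod_ac acs R"
    and P: "right_principal ar acs R \<Gamma> P"
    and T: "is_seq ar acs R (insert P \<Gamma>) T" "id_ok ar acs R (insert P \<Gamma>) T"
  shows "derS ar acs R False \<Gamma> T"
proof -
  have dP: "derS ar acs R False \<Gamma> P" using P unfolding right_principal_def by blast
  have seq: "is_seq ar acs R \<Gamma> T" using T(1) by simp
  show ?thesis
  proof (cases "guarded P")
    case False
    then have "id_ok ar acs R \<Gamma> P"
      using P components_derivable_guarded unfolding right_principal_def by blast
    then show ?thesis using seq T(2) by (blast intro: derS.r_id id_ok_trans)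
  next
    case guarded: True
    show ?thesis
    proof (cases "\<exists>w\<in>insert T \<Gamma>. \<exists>v. subterm v w \<and> aceq acs v P")
      case True
      then obtain w v where "w \<in> insert T \<Gamma>" "subterm v w" "aceq acs P v"
        using aceq.ac_sym by blast
      then show ?thesis
        using cut_guarded_subterm[OF dP derS.r_id[OF T] guarded] by blast
    next
      case False
      obtain Q where "id_ok ar acs R \<Gamma> Q" using derS_id_ok_exists[OF dP] by blast
      moreover have "\<forall>w\<in>insert P \<Gamma>. normal_mod_ac acs R w" "normal_mod_ac acs R T"
        using T(1) by (auto simp: is_seq_iff wf_nf_def)
      ultimately have "id_ok ar acs R \<Gamma> T"
        using id_ok_replace[OF assms(1,2)] guarded T(2) False by blast
      with seq show ?thesis by (rule derS.r_id)
    qed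
  qed
qed

lemma cut_proper_subterm_right_principal:
  assumes "\<forall>(l, r)\<in>R. pvars r \<subseteq> pvars l" and "confluent_mod_ac acs R"
    and cut: "cut_admissible_below ar acs R (size P)" and P: "right_principal ar acs R \<Gamma> P"
    and "subterm A P" "A \<noteq> P" "guarded A"
    and A: "derS ar acs R False \<Gamma> A" and T: "derS ar acs R False (insert A \<Gamma>) T"
  shows "derS ar acs R False \<Gamma> T"
proof (cases "components_derivable ar acs R \<Gamma> P")
  case True
  have "size A < size P" using size_subterm assms(5,6) by blast
  then show ?thesis using cut_admissible_belowD[OF cut _ A T] by blast
next
  case False
  then have "id_ok ar acs R \<Gamma> P" "is_seq ar acs R \<Gamma> P"
    using P derS_is_seq unfolding right_principal_def by blast+
  then show ?thesis using cut_guarded_subterm_id_ok[OF assms(1,2) _ _ assms(5,7) A T] by blast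
qed

lemma cut_right_principal:
  assumes "\<forall>(l, r)\<in>R. pvars r \<subseteq> pvars l" and "confluent_mod_ac acs R"
    and cut: "cut_admissible_below ar acs R (size P)"
  shows "derS ar acs R c \<Gamma>\<^sub>P T \<Longrightarrow> c = False \<Longrightarrow> \<Gamma>\<^sub>P = insert P \<Gamma> \<Longrightarrow> right_principal ar acs R \<Gamma> P
    \<Longrightarrow> derS ar acs R False \<Gamma> T"
proof (induction arbitrary: \<Gamma> rule: derS.induct)
  case (r_id \<Gamma>\<^sub>P T c)
  then show ?case using cut_id_right_principal[OF assms(1,2)] by blast
next
  case r_cut
  then show ?case by simp
next
  case (r_pL M N \<Gamma>\<^sub>0 T c)
  have "wf_nf ar acs R (Pair M N)" using is_seq_memD[OF r_pL.hyps(1)] by simp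
  moreover have "is_seq ar acs R \<Gamma> T" using r_pL.hyps(1) r_pL.prems(2) by simp
  ultimately have seq: "is_seq ar acs R (\<Gamma> \<union> {M, N}) T" by (auto dest: wf_nf_argsD)
  have T: "derS ar acs R False (\<Gamma> \<union> {M, N}) T"
    using r_pL.prems right_principal_mono[OF r_pL.prems(3) _ seq] by (intro r_pL.IH) auto
  show ?case
  proof (cases "Pair M N = P")
    case True
    then have "derS ar acs R False \<Gamma> M" "derS ar acs R False \<Gamma> N"
      using right_principal_components[OF r_pL.prems(3)] by auto
    moreover have "size M < size P" "size N < size P" using True by auto
    ultimately show ?thesis using cut_two_below[OF cut _ _ _ _ T] by blast
  next
    case False
    then have "Pair M N \<in> \<Gamma>" using r_pL.prems(2) by blast
    then show ?thesis using derS.r_pL[of ar acs R M N \<Gamma> T] r_pL.hyps(1) r_pL.prems(2) T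
      by (simp add: insert_absorb)
  qed
next
  case (r_pR \<Gamma>\<^sub>P M N c)
  then have "is_seq ar acs R \<Gamma> (Pair M N)" by simp
  with r_pR show ?case by (blast intro: derS.r_pR)
next
  case (r_eR \<Gamma>\<^sub>P M N c)
  then have "is_seq ar acs R \<Gamma> (Enc M N)" by simp
  with r_eR show ?case by (blast intro: derS.r_eR)
next
  case (r_signR \<Gamma>\<^sub>P M N c)
  then have "is_seq ar acs R \<Gamma> (Sign M N)" by simp
  with r_signR show ?case by (blast intro: derS.r_signR)
next
  case (r_blindR \<Gamma>\<^sub>P M N c)
  then have "is_seq ar acs R \<Gamma> (Blind M N)" by simp
  with r_blindR show ?case by (blast intro: derS.r_blindR)
next
  case (r_eL M K \<Gamma>\<^sub>0 N c)
  have "wf_nf ar acs R (Enc M K)" using is_seq_memD[OF r_eL.hyps(1)] by simp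
  moreover have "is_seq ar acs R \<Gamma> N" using r_eL.hyps(1) r_eL.prems(2) by simp
  ultimately have seq: "is_seq ar acs R (\<Gamma> \<union> {M, K}) N" by (auto dest: wf_nf_argsD)
  have N: "derS ar acs R False (\<Gamma> \<union> {M, K}) N"
    using r_eL.prems right_principal_mono[OF r_eL.prems(3) _ seq] by (intro r_eL.IH(2)) auto
  show ?case
  proof (cases "Enc M K = P")
    case True
    then have "derS ar acs R False \<Gamma> M" "derS ar acs R False \<Gamma> K"
      using right_principal_components[OF r_eL.prems(3)] by auto
    moreover have "size M < size P" "size K < size P" using True by auto
    ultimately show ?thesis using cut_two_below[OF cut _ _ _ _ N] by blast
  next
    case False
    then have "Enc M K \<in> \<Gamma>" using r_eL.prems(2) by blast
    moreover have "derS ar acs R False \<Gamma> K" using r_eL.prems by (intro r_eL.IH(1)) auto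
    ultimately show ?thesis using derS.r_eL[of ar acs R M K \<Gamma> N] r_eL.hyps(1) r_eL.prems(2) N
      by (simp add: insert_absorb)
  qed
next
  case (r_blindL1 M K \<Gamma>\<^sub>0 N c)
  have "wf_nf ar acs R (Blind M K)" using is_seq_memD[OF r_blindL1.hyps(1)] by simp
  moreover have "is_seq ar acs R \<Gamma> N" using r_blindL1.hyps(1) r_blindL1.prems(2) by simp
  ultimately have seq: "is_seq ar acs R (\<Gamma> \<union> {M, K}) N" by (auto dest: wf_nf_argsD)
  have N: "derS ar acs R False (\<Gamma> \<union> {M, K}) N"
    using r_blindL1.prems right_principal_mono[OF r_blindL1.prems(3) _ seq]
      by (intro r_blindL1.IH(2)) auto
  show ?case
  proof (cases "Blind M K = P")
    case True
    then have "derS ar acs R False \<Gamma> M" "derS ar acs R False \<Gamma> K"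
      using right_principal_components[OF r_blindL1.prems(3)] by auto
    moreover have "size M < size P" "size K < size P" using True by auto
    ultimately show ?thesis using cut_two_below[OF cut _ _ _ _ N] by blast
  next
    case False
    then have "Blind M K \<in> \<Gamma>" using r_blindL1.prems(2) by blast
    moreover have "derS ar acs R False \<Gamma> K" using r_blindL1.prems by (intro r_blindL1.IH(1)) auto
    ultimately show ?thesis
      using derS.r_blindL1[of ar acs R M K \<Gamma> N] r_blindL1.hyps(1) r_blindL1.prems(2) N
      by (simp add: insert_absorb)
  qed
next
  case (r_signL K L \<Gamma>\<^sub>0 M N c)
  have "wf_nf ar acs R (Sign M K)" using is_seq_memD[OF r_signL.hyps(2)] by simp
  moreover have "is_seq ar acs R (insert P \<Gamma>) N" using r_signL.hyps(2) unfolding r_signL.prems(2) .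
  ultimately have seq: "is_seq ar acs R (insert M \<Gamma>) N" by (auto dest: wf_nf_argsD)
  have N: "derS ar acs R False (insert M \<Gamma>) N"
    using r_signL.prems right_principal_mono[OF r_signL.prems(3) _ seq] by (intro r_signL.IH) auto
  have "Pub L \<noteq> P"
    using right_principal_components[OF r_signL.prems(3)] by auto
  then have L: "Pub L \<in> \<Gamma>" using r_signL.prems(2) by blast
  show ?case
  proof (cases "Sign M K = P")
    case True
    then have "derS ar acs R False \<Gamma> M"
      using right_principal_components[OF r_signL.prems(3)] by auto
    moreover have "size M < size P" using True by auto
    ultimately show ?thesis using cut_admissible_belowD[OF cut _ _ N] by blast
  next
    case False
    then have S: "Sign M K \<in> \<Gamma>" using r_signL.prems(2) by blast
    then have \<Gamma>1: "\<Gamma> \<union> {Sign M K, Pub L} = \<Gamma>" and \<Gamma>2: "\<Gamma> \<union> {Sign M K, Pub L, M} = insert M \<Gamma>"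
      using L by blast+
    have "derS ar acs R False (\<Gamma> \<union> {Sign M K, Pub L}) N"
      by (rule derS.r_signL[OF r_signL.hyps(1)]) (use seq N in \<open>simp_all only: \<Gamma>1 \<Gamma>2 is_seq_insert\<close>)
    then show ?thesis unfolding \<Gamma>1 .
  qed
next
  case (r_blindL2 M Rr K \<Gamma>\<^sub>0 N c)
  have "wf_nf ar acs R (Sign (Blind M Rr) K)" using is_seq_memD[OF r_blindL2.hyps(1)] by simp
  moreover have "wf_nf ar acs R (Sign M K)"
    using derS_is_seq[OF r_blindL2.hyps(3)] by (simp add: is_seq_iff)
  moreover have "is_seq ar acs R \<Gamma> N" using r_blindL2.hyps(1) r_blindL2.prems(2) by simp
  ultimately have seq: "is_seq ar acs R (\<Gamma> \<union> {Sign M K, Rr}) N" by (auto dest: wf_nf_argsD)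
  have N: "derS ar acs R False (\<Gamma> \<union> {Sign M K, Rr}) N"
    using r_blindL2.prems right_principal_mono[OF r_blindL2.prems(3) _ seq]
    by (intro r_blindL2.IH(2)) auto
  have Rr: "derS ar acs R False \<Gamma> Rr" using r_blindL2.prems by (intro r_blindL2.IH(1)) auto
  show ?case
  proof (cases "Sign (Blind M Rr) K = P")
    case True
    then show ?thesis using right_principal_components[OF r_blindL2.prems(3)] cut Rr N
      by (auto intro: cut_sign_blind)
  next
    case False
    then have "Sign (Blind M Rr) K \<in> \<Gamma>" using r_blindL2.prems(2) by blast
    then show ?thesis
      using derS.r_blindL2[of ar acs R M Rr K \<Gamma> N] r_blindL2.hyps(1) r_blindL2.prems(2) N Rr
      by (simp add: insert_absorb)
  qed
next
  case (r_gs \<Gamma>\<^sub>P T A c)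
  have A: "derS ar acs R False \<Gamma> A" using r_gs.prems by (intro r_gs.IH(1)) auto
  show ?case
  proof (cases "A = P")
    case True
    then show ?thesis using r_gs.prems by (intro r_gs.IH(2)) auto
  next
    case A_ne_P: False
    have seq: "is_seq ar acs R (insert A \<Gamma>) T"
      using r_gs.hyps(1) r_gs.prems(2) derS_wf_nf[OF A] by simp
    have T: "derS ar acs R False (insert A \<Gamma>) T"
      using r_gs.prems right_principal_mono[OF r_gs.prems(3) _ seq] by (intro r_gs.IH(2)) auto
    show ?thesis
    proof (cases "\<exists>B\<in>insert T \<Gamma>. subterm A B")
      case True
      have "is_seq ar acs R \<Gamma> T" using r_gs.hyps(1) r_gs.prems(2) by simp
      then show ?thesis using r_gs.hyps(2) True A T by (rule derS.r_gs)
    next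
      case False
      then have "subterm A P" using r_gs.hyps(3) r_gs.prems(2) by auto
      then show ?thesis
        using cut_proper_subterm_right_principal[OF assms r_gs.prems(3) _ A_ne_P r_gs.hyps(2) A T]
        by blast
    qed
  qed
qed

text \<open>Induction on the left premise: left rules and gs are permuted below the cut,
  the other cases are handed over to the right premise.\<close>

lemma cut_admissible_step:
  assumes "\<forall>(l, r)\<in>R. pvars r \<subseteq> pvars l" and "confluent_mod_ac acs R"
  shows "derS ar acs R c \<Gamma> P \<Longrightarrow> c = False \<Longrightarrow> cut_admissible_below ar acs R (size P)
    \<Longrightarrow> derS ar acs R False (insert P \<Gamma>) T \<Longrightarrow> derS ar acs R False \<Gamma> T"
proof (induction arbitrary: T rule: derS.induct)
  case (r_id \<Gamma> P c)
  have P: "derS ar acs R False \<Gamma> P" using r_id.hyps by (rule derS.r_id)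
  show ?case
  proof (cases "guarded P")
    case True
    with r_id P show ?thesis by (blast intro: cut_guarded_subterm_id_ok[OF assms] st_refl)
  next
    case False
    with r_id P have "right_principal ar acs R \<Gamma> P" unfolding right_principal_def by blast
    with r_id show ?thesis by (blast intro: cut_right_principal[OF assms])
  qed
next
  case r_cut
  then show ?case by simp
next
  case (r_pL M N \<Gamma> P c)
  have "is_seq ar acs R (insert P (\<Gamma> \<union> {Pair M N, M, N})) P"
    using derS_is_seq[OF r_pL.hyps(2)] derS_wf_nf[OF r_pL.hyps(2)] by simp
  then have "derS ar acs R False (insert P (\<Gamma> \<union> {Pair M N, M, N})) T"
    by (rule derS_mono[OF r_pL.prems(3), rotated]) blast
  then have "derS ar acs R False (\<Gamma> \<union> {Pair M N, M, N}) T" using r_pL by (intro r_pL.IH) auto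
  moreover have "is_seq ar acs R (insert (Pair M N) \<Gamma>) T"
    using derS_is_seq[OF r_pL.prems(3)] by simp
  ultimately show ?case using r_pL.prems(1) by (metis derS.r_pL)
next
  case (r_eL M K \<Gamma> P c)
  have "is_seq ar acs R (insert P (\<Gamma> \<union> {Enc M K, M, K})) P"
    using derS_is_seq[OF r_eL.hyps(3)] derS_wf_nf[OF r_eL.hyps(3)] by simp
  then have "derS ar acs R False (insert P (\<Gamma> \<union> {Enc M K, M, K})) T"
    by (rule derS_mono[OF r_eL.prems(3), rotated]) blast
  then have "derS ar acs R False (\<Gamma> \<union> {Enc M K, M, K}) T" using r_eL by (intro r_eL.IH(2)) auto
  moreover have "is_seq ar acs R (insert (Enc M K) \<Gamma>) T" using derS_is_seq[OF r_eL.prems(3)] by simp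
  ultimately show ?case using r_eL.hyps(2) r_eL.prems(1) by (metis derS.r_eL)
next
  case (r_signL K L \<Gamma> M P c)
  have "is_seq ar acs R (insert P (\<Gamma> \<union> {Sign M K, Pub L, M})) P"
    using derS_is_seq[OF r_signL.hyps(3)] derS_wf_nf[OF r_signL.hyps(3)] by simp
  then have "derS ar acs R False (insert P (\<Gamma> \<union> {Sign M K, Pub L, M})) T"
    by (rule derS_mono[OF r_signL.prems(3), rotated]) blast
  then have "derS ar acs R False (\<Gamma> \<union> {Sign M K, Pub L, M}) T"
    using r_signL by (intro r_signL.IH) auto
  moreover have "is_seq ar acs R (\<Gamma> \<union> {Sign M K, Pub L}) T"
    using derS_is_seq[OF r_signL.prems(3)] by simp
  ultimately show ?case using r_signL.hyps(1) r_signL.prems(1) by (metis derS.r_signL)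
next
  case (r_blindL1 M K \<Gamma> P c)
  have "is_seq ar acs R (insert P (\<Gamma> \<union> {Blind M K, M, K})) P"
    using derS_is_seq[OF r_blindL1.hyps(3)] derS_wf_nf[OF r_blindL1.hyps(3)] by simp
  then have "derS ar acs R False (insert P (\<Gamma> \<union> {Blind M K, M, K})) T"
    by (rule derS_mono[OF r_blindL1.prems(3), rotated]) blast
  then have "derS ar acs R False (\<Gamma> \<union> {Blind M K, M, K}) T"
    using r_blindL1 by (intro r_blindL1.IH(2)) auto
  moreover have "is_seq ar acs R (insert (Blind M K) \<Gamma>) T"
    using derS_is_seq[OF r_blindL1.prems(3)] by simp
  ultimately show ?case using r_blindL1.hyps(2) r_blindL1.prems(1) by (metis derS.r_blindL1)
next
  case (r_blindL2 M Rr K \<Gamma> P c)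
  have "is_seq ar acs R (insert P (\<Gamma> \<union> {Sign (Blind M Rr) K, Sign M K, Rr})) P"
    using derS_is_seq[OF r_blindL2.hyps(3)] derS_wf_nf[OF r_blindL2.hyps(3)] by simp
  then have "derS ar acs R False (insert P (\<Gamma> \<union> {Sign (Blind M Rr) K, Sign M K, Rr})) T"
    by (rule derS_mono[OF r_blindL2.prems(3), rotated]) blast
  then have "derS ar acs R False (\<Gamma> \<union> {Sign (Blind M Rr) K, Sign M K, Rr}) T"
    using r_blindL2 by (intro r_blindL2.IH(2)) auto
  moreover have "is_seq ar acs R (insert (Sign (Blind M Rr) K) \<Gamma>) T"
    using derS_is_seq[OF r_blindL2.prems(3)] by simp
  ultimately show ?case using r_blindL2.hyps(2) r_blindL2.prems(1) by (metis derS.r_blindL2)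
next
  case (r_pR \<Gamma> M N c)
  then have "right_principal ar acs R \<Gamma> (Pair M N)"
    unfolding right_principal_def by (auto intro: derS.r_pR)
  with r_pR show ?case by (blast intro: cut_right_principal[OF assms])
next
  case (r_eR \<Gamma> M N c)
  then have "right_principal ar acs R \<Gamma> (Enc M N)"
    unfolding right_principal_def by (auto intro: derS.r_eR)
  with r_eR show ?case by (blast intro: cut_right_principal[OF assms])
next
  case (r_signR \<Gamma> M N c)
  then have "right_principal ar acs R \<Gamma> (Sign M N)"
    unfolding right_principal_def by (auto intro: derS.r_signR)
  with r_signR show ?case by (blast intro: cut_right_principal[OF assms])
next
  case (r_blindR \<Gamma> M N c)
  then have "right_principal ar acs R \<Gamma> (Blind M N)"
    unfolding right_principal_def by (auto intro: derS.r_blindR)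
  with r_blindR show ?case by (blast intro: cut_right_principal[OF assms])
next
  case (r_gs \<Gamma> P A c)
  have "is_seq ar acs R (insert P (insert A \<Gamma>)) P"
    using derS_is_seq[OF r_gs.hyps(5)] derS_wf_nf[OF r_gs.hyps(5)] by simp
  then have "derS ar acs R False (insert P (insert A \<Gamma>)) T"
    by (rule derS_mono[OF r_gs.prems(3), rotated]) blast
  then have T: "derS ar acs R False (insert A \<Gamma>) T" by (rule r_gs.IH(2)[OF r_gs.prems(1,2)])
  have A: "derS ar acs R False \<Gamma> A" using r_gs.hyps(4) r_gs.prems(1) by simp
  show ?case
  proof (cases "\<exists>B\<in>insert T \<Gamma>. subterm A B")
    case True
    have "is_seq ar acs R \<Gamma> T" using derS_is_seq[OF r_gs.prems(3)] by simp
    then show ?thesis using r_gs.hyps(2) True A T by (rule derS.r_gs)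
  next
    case False
    then have "subterm A P" using r_gs.hyps(3) by auto
    show ?thesis
    proof (cases "A = P")
      case True
      then show ?thesis using r_gs.IH(1)[OF r_gs.prems(1) _ T] r_gs.prems(2) by simp
    next
      case False
      then have "size A < size P" using size_subterm \<open>subterm A P\<close> by blast
      then show ?thesis using cut_admissible_belowD[OF r_gs.prems(2) _ A T] by blast
    qed
  qed
qed

theorem cut_admissible:
  assumes "\<forall>(l, r)\<in>R. pvars r \<subseteq> pvars l" and "confluent_mod_ac acs R"
  shows "derS ar acs R False \<Gamma> P \<Longrightarrow> derS ar acs R False (insert P \<Gamma>) T \<Longrightarrow> derS ar acs R False \<Gamma> T"
proof (induction "size P" arbitrary: P \<Gamma> T rule: less_induct)
  case less
  then have "cut_admissible_below ar acs R (size P)"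
    unfolding cut_admissible_below_def by blast
  with less.prems show ?case using cut_admissible_step[OF assms] by blast
qed

theorem cut_elimination:
  assumes "\<forall>(l, r)\<in>R. pvars r \<subseteq> pvars l" and "confluent_mod_ac acs R"
  shows "derS ar acs R c \<Gamma> M \<Longrightarrow> derS ar acs R False \<Gamma> M"
proof (induction rule: derS.induct)
  case r_cut
  then show ?case using cut_admissible[OF assms] by blast
qed (rule derS.intros; assumption)+

theorem theorem1:
  fixes ar :: "'f \<Rightarrow> nat" and th :: "'f \<Rightarrow> nat" and acs :: "'f set"
    and R :: "('f pat \<times> 'f pat) set" and \<Gamma> :: "'f trm set" and M :: "'f trm"
  assumes "E_setting ar th acs R"
    and "derS ar acs R True \<Gamma> M"
  shows "derS ar acs R False \<Gamma> M"
proof -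
  have "\<forall>(l, r)\<in>R. pvars r \<subseteq> pvars l" and "confluent_mod_ac acs R"
    using assms(1) unfolding E_setting_def by fast+
  then show ?thesis using cut_elimination assms(2) by blast
qed

end
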